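(* Consider the packet erasure broadcast model below with $n\ge 1$ receivers, operated under Algorithm 1 (drop when decoded), and assume $\lambda<\mu$. Then the expected size of the sender's physical queue in steady state is $\Omega\left(\frac{1}{(1-\rho)^2}\right)$ as $\rho=\lambda/\mu\to 1^-$, where $\lambda,\mu\in(0,1)$ and one of $\lambda,\mu$ is held fixed while the other varies so that $\rho$ increases to $1$.
   Context: Model: a sender broadcasts a stream of packets to $n$ receivers. Packets are fixed-length vectors over a finite field $\mathbb{F}_q$; the $k$-th packet to arrive at the sender is $\mathbf{p}_k$. Time is slotted. In each slot one new packet arrives at the sender with probability $\lambda$, independently across slots, just after the beginning of the slot. The sender has an unbounded queue (the physical queue); in each slot it may transmit one linear combination of the packets in its queue, whose coefficient vector with respect to the original packets is carried in the header. Each receiver independently receives the transmission with probability $\mu$ and otherwise suffers a (detectable) erasure; erasures are independent across receivers and slots. Feedback is perfect and reaches the sender before the end of the slot; packets are dropped from the queue just before the end of the slot; queue sizes are measured at the end of the slot. The load factor is $\rho=\lambda/\mu$. The knowledge space of a node is the space of coefficient vectors (with respect to the packets arrived so far) of linear combinations of packets it can compute; the sender's knowledge space after $A$ arrivals is $\mathbb{F}_q^A$. The virtual queue of receiver $j$ has size equal to the dimension of the sender's knowledge space minus that of receiver $j$'s. Algorithm 1: in each slot the sender transmits a random linear combination of all packets currently in its queue; the field is assumed large enough that every transmission is innovative (lies outside the knowledge space) for every receiver whose knowledge space differs from the sender's. A receiver reports decoding to the sender, and the sender regards a receiver as having decoded the packets only at times when that receiver's virtual queue becomes empty (earlier decodings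 are ignored). The sender drops a packet from its queue once all receivers have decoded it in this sense. *)

theory Defs
  imports "HOL-Probability.Probability"
begin

text \<open>Outcome of one slot: (new packet arrives?, which receivers receive the transmission).
  Receivers are indexed by 0..n-1.\<close>

definition slot_pmf :: "real \<Rightarrow> real \<Rightarrow> nat \<Rightarrow> (bool \<times> (nat \<Rightarrow> bool)) pmf" where
  "slot_pmf lam mu n = pair_pmf (bernoulli_pmf lam) (Pi_pmf {..<n} False (\<lambda>_. bernoulli_pmf mu))"

text \<open>Probability space of sample paths: i.i.d. slot outcomes; slot t (t = 0,1,...) uses w !! t.\<close>

definition paths :: "real \<Rightarrow> real \<Rightarrow> nat \<Rightarrow> (bool \<times> (nat \<Rightarrow> bool)) stream measure" where
  "paths lam mu n = stream_space (measure_pmf (slot_pmf lam mu n))"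

text \<open>Number of packets arrived by the end of the first t slots (= sender's knowledge dimension).\<close>

fun arrivals :: "(bool \<times> (nat \<Rightarrow> bool)) stream \<Rightarrow> nat \<Rightarrow> nat" where
  "arrivals w 0 = 0"
| "arrivals w (Suc t) = arrivals w t + (if fst (w !! t) then 1 else 0)"

text \<open>Under Algorithm 1 every
  transmission is innovative for a receiver whose knowledge space differs from the sender's,
  so the receiver's dimension grows by one iff it receives and its virtual queue
  (after the arrival at the start of the slot) is nonempty.\<close>

fun vqueue :: "(bool \<times> (nat \<Rightarrow> bool)) stream \<Rightarrow> nat \<Rightarrow> nat \<Rightarrow> nat" where
  "vqueue w j 0 = 0"
| "vqueue w j (Suc t) =
     (let q = vqueue w j t + (if fst (w !! t) then 1 else 0)
      in if 0 < q \<and> snd (w !! t) j then q - 1 else q)"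

text \<open>Physical queue at the end of the first t slots: packets k (1-indexed, arrived by time t)
  that not every receiver has decoded, where receiver j counts as having decoded packet k
  iff its virtual queue was empty at some time s \<le> t at which packet k had already arrived.\<close>

definition phys_queue :: "nat \<Rightarrow> (bool \<times> (nat \<Rightarrow> bool)) stream \<Rightarrow> nat \<Rightarrow> nat" where
  "phys_queue n w t = card {k \<in> {1..arrivals w t}.
      \<not> (\<forall>j<n. \<exists>s\<le>t. k \<le> arrivals w s \<and> vqueue w j s = 0)}"

definition exp_phys_queue :: "real \<Rightarrow> real \<Rightarrow> nat \<Rightarrow> nat \<Rightarrow> ennreal" where
  "exp_phys_queue lam mu n t = (\<integral>\<^sup>+ w. of_nat (phys_queue n w t) \<partial>(paths lam mu n))"

text \<open>Steady-state expected physical queue size (as a limit inferior of the expectations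
  at the end of slot t; it coincides with the limit whenever that exists).\<close>

definition ss_phys_queue :: "real \<Rightarrow> real \<Rightarrow> nat \<Rightarrow> ennreal" where
  "ss_phys_queue lam mu n = liminf (\<lambda>t. exp_phys_queue lam mu n t)"

end

theory Submission
  imports Defs
begin

text \<open>A packet can leave the sender's queue only after the virtual queue of receiver 0 has been
  empty at some time since its arrival. So the physical queue is at least the number \<open>B\<close> of
  packets that arrived since the virtual queue \<open>Q\<close> of receiver 0 was last empty, and \<open>(Q, B)\<close>
  is a Markov chain driven by the arrivals and the receptions of receiver 0 alone.
  \<open>Q\<close> is a birth-death chain with geometric tail ratio \<open>\<lambda>(1-\<mu>) / (\<mu>(1-\<lambda>))\<close>, so
  \<open>E Q\<^sup>2 = O(1 / (\<mu>-\<lambda>)\<^sup>2)\<close>, and the drift of \<open>Q\<^sup>2\<close> shows that \<open>E Q\<close> eventually exceeds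
  \<open>a = \<lambda>(1-\<mu>) / (4(\<mu>-\<lambda>))\<close>. The potential \<open>Q \<cdot> min B K\<close> gains about \<open>\<lambda> Q\<close> per slot while
  \<open>B < K\<close> and loses \<open>(\<mu>-\<lambda>) min B K\<close>; balancing the two over a long window forces
  \<open>E B \<ge> \<lambda> a / (4(\<mu>-\<lambda>)) = \<rho>\<^sup>2 (1-\<mu>) / (16 (1-\<rho>)\<^sup>2)\<close>.\<close>

section \<open>Iterated random maps\<close>

fun iter_pmf :: "('s \<Rightarrow> 'y \<Rightarrow> 's) \<Rightarrow> 'y pmf \<Rightarrow> 's \<Rightarrow> nat \<Rightarrow> 's pmf" where
  "iter_pmf f p s 0 = return_pmf s"
| "iter_pmf f p s (Suc t) = p \<bind> (\<lambda>y. iter_pmf f p (f s y) t)"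

fun iter_stream :: "('s \<Rightarrow> 'y \<Rightarrow> 's) \<Rightarrow> 'y stream \<Rightarrow> 's \<Rightarrow> nat \<Rightarrow> 's" where
  "iter_stream f w s 0 = s"
| "iter_stream f w s (Suc t) = iter_stream f (stl w) (f s (shd w)) t"

lemma iter_stream_Suc_right: "iter_stream f w s (Suc t) = f (iter_stream f w s t) (w !! t)"
  by (induction t arbitrary: s w) auto

lemma iter_pmf_Suc_right: "iter_pmf f p s (Suc t) = iter_pmf f p s t \<bind> (\<lambda>s'. map_pmf (f s') p)"
proof (induction t arbitrary: s)
  case 0
  then show ?case by (simp add: bind_return_pmf map_pmf_def)
next
  case (Suc t)
  have "iter_pmf f p s (Suc (Suc t)) = p \<bind> (\<lambda>y. iter_pmf f p (f s y) (Suc t))"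
    by simp
  also have "\<dots> = p \<bind> (\<lambda>y. iter_pmf f p (f s y) t \<bind> (\<lambda>s'. map_pmf (f s') p))"
    using Suc by simp
  also have "\<dots> = iter_pmf f p s (Suc t) \<bind> (\<lambda>s'. map_pmf (f s') p)"
    by (simp add: bind_assoc_pmf)
  finally show ?case .
qed

lemma iter_pmf_map: "iter_pmf (\<lambda>s x. f s (g x)) p s t = iter_pmf f (map_pmf g p) s t"
  by (induction t arbitrary: s) (simp_all add: bind_map_pmf)

lemma finite_set_iter_pmf:
  "finite (set_pmf p) \<Longrightarrow> finite (set_pmf (iter_pmf f p s t))"
  by (induction t arbitrary: s) auto

lemma expectation_bind_pmf_finite:
  fixes h :: "'b \<Rightarrow> real"
  assumes "finite (set_pmf p)" "\<And>x. x \<in> set_pmf p \<Longrightarrow> finite (set_pmf (f x))"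
  shows "measure_pmf.expectation (p \<bind> f) h =
         measure_pmf.expectation p (\<lambda>x. measure_pmf.expectation (f x) h)"
  using assms by (simp add: pmf_expectation_bind[OF assms order_refl] integral_measure_pmf[OF assms(1)])

lemma expectation_iter_pmf_Suc:
  fixes h :: "'s \<Rightarrow> real"
  assumes "finite (set_pmf p)"
  shows "measure_pmf.expectation (iter_pmf f p s (Suc t)) h =
         measure_pmf.expectation p (\<lambda>y. measure_pmf.expectation (iter_pmf f p (f s y) t) h)"
  using assms by (simp add: expectation_bind_pmf_finite finite_set_iter_pmf)

lemma expectation_iter_pmf_Suc_right:
  fixes h :: "'s \<Rightarrow> real"
  assumes "finite (set_pmf p)"
  shows "measure_pmf.expectation (iter_pmf f p s (Suc t)) h =
         measure_pmf.expectation (iter_pmf f p s t) (\<lambda>s'. measure_pmf.expectation p (\<lambda>y. h (f s' y)))"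
  unfolding iter_pmf_Suc_right using assms
  by (subst expectation_bind_pmf_finite) (simp_all add: finite_set_iter_pmf)

lemma expectation_iter_pmf_mono:
  fixes h :: "'s::order \<Rightarrow> real"
  assumes p: "finite (set_pmf p)" and f: "\<And>y. mono (\<lambda>s. f s y)" and h: "mono h"
  shows "s \<le> s' \<Longrightarrow> measure_pmf.expectation (iter_pmf f p s t) h \<le> measure_pmf.expectation (iter_pmf f p s' t) h"
proof (induction t arbitrary: s s')
  case 0
  then show ?case using h by (simp add: mono_def)
next
  case (Suc t)
  have "f s y \<le> f s' y" for y using f Suc.prems by (simp add: mono_def)
  then show ?case
    unfolding expectation_iter_pmf_Suc[OF p]
    by (intro integral_mono Suc.IH) (auto intro: integrable_measure_pmf_finite p)
qed

lemma expectation_iter_pmf_incseq: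
  fixes h :: "'s::order \<Rightarrow> real"
  assumes p: "finite (set_pmf p)" and f: "\<And>y. mono (\<lambda>s. f s y)" and h: "mono h"
    and s: "\<And>y. s \<le> f s y"
  shows "incseq (\<lambda>t. measure_pmf.expectation (iter_pmf f p s t) h)"
proof (rule incseq_SucI)
  fix t
  have "measure_pmf.expectation (iter_pmf f p s t) h =
        measure_pmf.expectation p (\<lambda>_. measure_pmf.expectation (iter_pmf f p s t) h)"
    by simp
  also have "\<dots> \<le> measure_pmf.expectation (iter_pmf f p s (Suc t)) h"
    unfolding expectation_iter_pmf_Suc[OF p]
    by (intro integral_mono expectation_iter_pmf_mono[OF p f h] s)
       (auto intro: integrable_measure_pmf_finite p)
  finally show "measure_pmf.expectation (iter_pmf f p s t) h \<le> measure_pmf.expectation (iter_pmf f p s (Suc t)) h" .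
qed

lemma measurable_iter_stream:
  "(\<lambda>w. iter_stream f w (s::'s::countable) t) \<in> measurable (stream_space (measure_pmf p)) (count_space UNIV)"
proof (induction t arbitrary: s)
  case 0 then show ?case by simp
next
  case (Suc t)
  have "(\<lambda>w. f s (shd w)) \<in> measurable (stream_space (measure_pmf p)) (count_space UNIV)"
    by (rule measurable_compose[OF measurable_shd]) simp
  moreover have "(\<lambda>w. iter_stream f (stl w) s' t) \<in> measurable (stream_space (measure_pmf p)) (count_space UNIV)" for s'
    by (rule measurable_compose[OF measurable_stl Suc])
  ultimately show ?case
    using measurable_compose_countable by simp
qed

lemma nn_integral_iter_stream:
  fixes s :: "'s::countable"
  shows "(\<integral>\<^sup>+w. g (iter_stream f w s t) \<partial>stream_space (measure_pmf p)) = (\<integral>\<^sup>+x. g x \<partial>iter_pmf f p s t)"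
proof (induction t arbitrary: s)
  case 0
  interpret prob_space "stream_space (measure_pmf p)"
    by (rule prob_space.prob_space_stream_space) (rule prob_space_measure_pmf)
  show ?case by (simp add: emeasure_space_1)
next
  case (Suc t)
  have "(\<lambda>w. g (iter_stream f w s (Suc t))) \<in> borel_measurable (stream_space (measure_pmf p))"
    by (rule measurable_compose[OF measurable_iter_stream]) simp
  then have "(\<integral>\<^sup>+w. g (iter_stream f w s (Suc t)) \<partial>stream_space (measure_pmf p)) =
      (\<integral>\<^sup>+y. (\<integral>\<^sup>+w. g (iter_stream f w (f s y) t) \<partial>stream_space (measure_pmf p)) \<partial>p)"
    by (simp add: prob_space.nn_integral_stream_space[OF prob_space_measure_pmf])
  then show ?case using Suc by simp
qed

text \<open>\<open>x - \<epsilon> x\<^sup>2 \<le> 1 / (4 \<epsilon>)\<close> (AM-GM) bounds the discarded part when \<open>b \<ge> K\<close>.\<close>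

lemma truncation_lower_bound:
  fixes x b K \<epsilon> :: real
  assumes "0 < \<epsilon>" "0 < K" "0 \<le> b"
  shows "x - \<epsilon> * x\<^sup>2 - b / (4 * \<epsilon> * K) \<le> (if b < K then x else 0)"
proof (cases "b < K")
  case True
  have "0 \<le> \<epsilon> * x\<^sup>2" "0 \<le> b / (4 * \<epsilon> * K)" using assms by simp_all
  with True show ?thesis by simp
next
  case False
  have "0 \<le> (2 * \<epsilon> * x - 1)\<^sup>2" by simp
  then have "4 * \<epsilon> * (x - \<epsilon> * x\<^sup>2) \<le> 1"
    by (simp add: power2_eq_square algebra_simps)
  then have "x - \<epsilon> * x\<^sup>2 \<le> 1 / (4 * \<epsilon>)"
    using assms by (simp add: le_divide_eq algebra_simps)
  also have "\<dots> = K / (4 * \<epsilon> * K)"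
    using assms by simp
  also have "\<dots> \<le> b / (4 * \<epsilon> * K)"
    using False assms by (intro divide_right_mono) auto
  finally show ?thesis using False by simp
qed

lemma square_eq_sum_odd_indicator:
  assumes "q \<le> t"
  shows "(real q)\<^sup>2 = (\<Sum>k<t. (2 * real k + 1) * of_bool (Suc k \<le> q))"
proof -
  have odd_sum: "(\<Sum>k<m. 2 * real k + 1) = (real m)\<^sup>2" for m
    by (induction m) (simp_all add: algebra_simps power2_eq_square)
  have "(\<Sum>k<t. (2 * real k + 1) * of_bool (Suc k \<le> q)) = (\<Sum>k<t. if k \<in> {..<q} then 2 * real k + 1 else 0)"
    by (intro sum.cong) auto
  also have "\<dots> = (\<Sum>k\<in>{..<t} \<inter> {..<q}. 2 * real k + 1)"
    by (simp add: sum.inter_restrict)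
  also have "{..<t} \<inter> {..<q} = {..<q}" using assms by auto
  finally show ?thesis by (simp add: odd_sum)
qed

lemma sum_odd_times_power_le:
  fixes r :: real
  assumes "0 \<le> r" "r < 1"
  shows "(\<Sum>k<N. (2 * real k + 1) * r ^ Suc k) \<le> 2 / (1 - r)\<^sup>2"
proof -
  let ?S = "\<Sum>k<N. (2 * real k + 1) * r ^ k"
  have closed: "?S * (1 - r)\<^sup>2 = (1 + r) - (2 * real N + 1) * r ^ N + (2 * real N - 1) * r ^ (N + 1)"
    by (induction N) (simp_all add: algebra_simps power2_eq_square)
  have "(2 * real N - 1) * r ^ (N + 1) \<le> (2 * real N + 1) * r ^ (N + 1)"
    using assms by (intro mult_right_mono) auto
  also have "\<dots> \<le> (2 * real N + 1) * r ^ N"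
    using assms by (intro mult_left_mono) (auto simp: power_le_one mult_left_le_one_le)
  finally have "?S * (1 - r)\<^sup>2 \<le> 1 + r"
    using closed by linarith
  then have S: "?S \<le> (1 + r) / (1 - r)\<^sup>2"
    using assms by (simp add: pos_le_divide_eq)
  have "(\<Sum>k<N. (2 * real k + 1) * r ^ Suc k) = r * ?S"
    by (simp add: sum_distrib_left algebra_simps)
  also have "\<dots> \<le> 1 * ((1 + r) / (1 - r)\<^sup>2)"
    using S assms by (intro mult_mono sum_nonneg) auto
  also have "\<dots> \<le> 2 / (1 - r)\<^sup>2"
    using assms by (simp add: divide_right_mono)
  finally show ?thesis .
qed

section \<open>The busy period of receiver 0\<close>

text \<open>State \<open>(Q, B)\<close> of receiver 0: \<open>Q\<close> is its virtual queue and \<open>B\<close> the number of packets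
  that arrived since \<open>Q\<close> was last empty. The slot outcome is (arrival, reception by receiver 0).\<close>

definition busy_step :: "nat \<times> nat \<Rightarrow> bool \<times> bool \<Rightarrow> nat \<times> nat" where
  "busy_step s y = (let q = fst s + (if fst y then 1 else 0);
                        q' = (if 0 < q \<and> snd y then q - 1 else q)
                    in (q', if q' = 0 then 0 else snd s + (if fst y then 1 else 0)))"

definition link_pmf :: "real \<Rightarrow> real \<Rightarrow> (bool \<times> bool) pmf" where
  "link_pmf lam mu = pair_pmf (bernoulli_pmf lam) (bernoulli_pmf mu)"

abbreviation busy_chain :: "real \<Rightarrow> real \<Rightarrow> nat \<Rightarrow> (nat \<times> nat) pmf" where
  "busy_chain lam mu t \<equiv> iter_pmf busy_step (link_pmf lam mu) (0, 0) t"

definition receiver0 :: "bool \<times> (nat \<Rightarrow> bool) \<Rightarrow> bool \<times> bool" where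
  "receiver0 x = (fst x, snd x 0)"

abbreviation busy_path :: "(bool \<times> (nat \<Rightarrow> bool)) stream \<Rightarrow> nat \<Rightarrow> nat \<times> nat" where
  "busy_path w t \<equiv> iter_stream (\<lambda>s x. busy_step s (receiver0 x)) w (0, 0) t"

lemma finite_set_link_pmf: "finite (set_pmf (link_pmf lam mu))"
  by (rule finite_subset[of _ UNIV]) auto

lemma integrable_busy_chain [simp]: "integrable (measure_pmf (busy_chain lam mu t)) (h :: nat \<times> nat \<Rightarrow> real)"
  by (rule integrable_measure_pmf_finite[OF finite_set_iter_pmf[OF finite_set_link_pmf]])

lemma mono_busy_step: "mono (\<lambda>s. busy_step s y)"
  by (auto simp: mono_def busy_step_def Let_def less_eq_prod_def)

lemma mono_real_fst: "mono (\<lambda>s :: nat \<times> nat. real (fst s))"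
  by (auto simp: mono_def less_eq_prod_def)

lemma mono_real_snd: "mono (\<lambda>s :: nat \<times> nat. real (snd s))"
  by (auto simp: mono_def less_eq_prod_def)

lemma fst_busy_step:
  "fst (busy_step s (True, True)) = fst s" "fst (busy_step s (True, False)) = fst s + 1"
  "fst (busy_step s (False, True)) = fst s - 1" "fst (busy_step s (False, False)) = fst s"
  by (auto simp: busy_step_def Let_def)

lemma busy_chain_support:
  "s \<in> set_pmf (busy_chain lam mu t) \<Longrightarrow> (fst s = 0 \<longrightarrow> snd s = 0) \<and> fst s \<le> t"
proof (induction t arbitrary: s)
  case 0
  then show ?case by simp
next
  case (Suc t)
  from Suc.prems obtain s' y where s': "s' \<in> set_pmf (busy_chain lam mu t)" and s: "s = busy_step s' y"
    unfolding iter_pmf_Suc_right by auto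
  have "fst s' \<le> t" using Suc.IH[OF s'] by simp
  then show ?case unfolding s by (auto simp: busy_step_def Let_def)
qed

lemma expectation_link_pmf:
  fixes h :: "bool \<times> bool \<Rightarrow> real"
  assumes "0 \<le> lam" "lam \<le> 1" "0 \<le> mu" "mu \<le> 1"
  shows "measure_pmf.expectation (link_pmf lam mu) h =
     lam * mu * h (True, True) + lam * (1 - mu) * h (True, False)
   + (1 - lam) * mu * h (False, True) + (1 - lam) * (1 - mu) * h (False, False)"
proof -
  have UNIV_eq: "(UNIV :: (bool \<times> bool) set) = {(True, True), (True, False), (False, True), (False, False)}"
    by auto
  show ?thesis
    by (subst integral_measure_pmf[of UNIV]) (auto simp: UNIV_eq link_pmf_def pmf_pair assms)
qed

lemma map_receiver0_slot_pmf:
  assumes "n \<ge> 1"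
  shows "map_pmf receiver0 (slot_pmf lam mu n) = link_pmf lam mu"
proof -
  have "map_pmf receiver0 (slot_pmf lam mu n) = map_pmf (\<lambda>(a, b). (id a, b 0)) (slot_pmf lam mu n)"
    by (intro map_pmf_cong) (auto simp: receiver0_def)
  also have "\<dots> = link_pmf lam mu"
    unfolding slot_pmf_def map_pair link_pmf_def using assms by (simp add: Pi_pmf_component)
  finally show ?thesis .
qed

lemma arrivals_mono: "s \<le> t \<Longrightarrow> arrivals w s \<le> arrivals w t"
  by (induction t) (auto simp: le_Suc_eq)

lemma fst_busy_path: "fst (busy_path w t) = vqueue w 0 t"
  by (induction t) (simp_all add: iter_stream_Suc_right busy_step_def receiver0_def Let_def del: iter_stream.simps(2))

text \<open>The last \<open>snd (busy_path w t)\<close> packets have arrived after the last time the virtual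
  queue of receiver 0 was empty, so the sender cannot have dropped them yet.\<close>

lemma busy_path_undecoded:
  "snd (busy_path w t) \<le> arrivals w t \<and>
   (\<forall>s\<le>t. vqueue w 0 s = 0 \<longrightarrow> arrivals w s + snd (busy_path w t) \<le> arrivals w t)"
proof (induction t)
  case 0
  then show ?case by simp
next
  case (Suc t)
  have step: "snd (busy_path w (Suc t)) =
      (if vqueue w 0 (Suc t) = 0 then 0 else snd (busy_path w t) + (if fst (w !! t) then 1 else 0))"
    using fst_busy_path[of w "Suc t"] fst_busy_path[of w t]
    by (simp add: iter_stream_Suc_right busy_step_def receiver0_def Let_def del: iter_stream.simps(2))
  show ?case
  proof (cases "vqueue w 0 (Suc t) = 0")
    case True
    then show ?thesis using step arrivals_mono[of _ "Suc t" w] by auto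
  next
    case False
    then show ?thesis using step Suc by (auto simp: le_Suc_eq)
  qed
qed

lemma snd_busy_path_le_phys_queue:
  assumes "n \<ge> 1"
  shows "snd (busy_path w t) \<le> phys_queue n w t"
proof -
  define A where "A = arrivals w t"
  define B where "B = snd (busy_path w t)"
  have "B \<le> A" using busy_path_undecoded unfolding A_def B_def by blast
  have "{A - B + 1 .. A} \<subseteq> {k \<in> {1..arrivals w t}.
      \<not> (\<forall>j<n. \<exists>s\<le>t. k \<le> arrivals w s \<and> vqueue w j s = 0)}"
  proof
    fix k assume k: "k \<in> {A - B + 1 .. A}"
    have "\<not> (k \<le> arrivals w s \<and> vqueue w 0 s = 0)" if "s \<le> t" for s
      using busy_path_undecoded[of w t] that k \<open>B \<le> A\<close> unfolding A_def B_def by force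
    then show "k \<in> {k \<in> {1..arrivals w t}. \<not> (\<forall>j<n. \<exists>s\<le>t. k \<le> arrivals w s \<and> vqueue w j s = 0)}"
      using k assms unfolding A_def by (auto intro!: exI[of _ 0])
  qed
  then have "card {A - B + 1 .. A} \<le> phys_queue n w t"
    unfolding phys_queue_def by (intro card_mono) simp_all
  with \<open>B \<le> A\<close> show ?thesis unfolding B_def by simp
qed

lemma expectation_busy_chain_le_exp_phys_queue:
  assumes "n \<ge> 1"
  shows "ennreal (measure_pmf.expectation (busy_chain lam mu t) (\<lambda>s. real (snd s))) \<le> exp_phys_queue lam mu n t"
proof -
  have chain: "busy_chain lam mu t = iter_pmf (\<lambda>s x. busy_step s (receiver0 x)) (slot_pmf lam mu n) (0, 0) t"
    unfolding iter_pmf_map map_receiver0_slot_pmf[OF assms] ..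
  have "ennreal (measure_pmf.expectation (busy_chain lam mu t) (\<lambda>s. real (snd s))) =
        (\<integral>\<^sup>+s. ennreal (real (snd s)) \<partial>busy_chain lam mu t)"
    by (rule nn_integral_eq_integral[symmetric]) auto
  also have "\<dots> = (\<integral>\<^sup>+w. ennreal (real (snd (busy_path w t))) \<partial>paths lam mu n)"
    unfolding chain paths_def by (rule nn_integral_iter_stream[symmetric])
  also have "\<dots> \<le> exp_phys_queue lam mu n t"
    unfolding exp_phys_queue_def
    by (intro nn_integral_mono) (use snd_busy_path_le_phys_queue[OF assms] in \<open>auto simp: ennreal_of_nat_eq_real_of_nat\<close>)
  finally show ?thesis .
qed

section \<open>Drift estimates\<close>

locale link_rates =
  fixes lam mu :: real
  assumes rates: "0 \<le> lam" "lam \<le> 1" "0 \<le> mu" "mu \<le> 1"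
begin

abbreviation E :: "nat \<Rightarrow> (nat \<times> nat \<Rightarrow> real) \<Rightarrow> real" where
  "E t h \<equiv> measure_pmf.expectation (busy_chain lam mu t) h"

definition next_mean :: "(nat \<times> nat \<Rightarrow> real) \<Rightarrow> nat \<times> nat \<Rightarrow> real" where
  "next_mean h s = measure_pmf.expectation (link_pmf lam mu) (\<lambda>y. h (busy_step s y))"

lemma next_mean_eq:
  "next_mean h s = lam * mu * h (busy_step s (True, True)) + lam * (1 - mu) * h (busy_step s (True, False))
     + (1 - lam) * mu * h (busy_step s (False, True)) + (1 - lam) * (1 - mu) * h (busy_step s (False, False))"
  unfolding next_mean_def by (rule expectation_link_pmf[OF rates])

lemma E_Suc: "E (Suc t) h = E t (next_mean h)"
  unfolding next_mean_def by (rule expectation_iter_pmf_Suc_right[OF finite_set_link_pmf])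

lemma E_mono:
  assumes "mono h" "t \<le> T"
  shows "E t h \<le> E T h"
proof -
  have "incseq (\<lambda>t. E t h)"
    by (rule expectation_iter_pmf_incseq[OF finite_set_link_pmf mono_busy_step assms(1)])
       (simp add: less_eq_prod_def)
  with assms(2) show ?thesis by (simp add: incseq_def)
qed

lemma next_mean_queue_sq:
  "(real (fst s))\<^sup>2 + lam * (1 - mu) - 2 * (mu - lam) * real (fst s) \<le> next_mean (\<lambda>s. (real (fst s))\<^sup>2) s"
proof (cases "fst s")
  case 0
  then show ?thesis by (simp add: next_mean_eq fst_busy_step algebra_simps)
next
  case (Suc m)
  have "next_mean (\<lambda>s. (real (fst s))\<^sup>2) s
      = (real (fst s))\<^sup>2 + lam * (1 - mu) + mu * (1 - lam) - 2 * (mu - lam) * real (fst s)"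
    unfolding next_mean_eq fst_busy_step Suc by (simp add: algebra_simps power2_eq_square)
  moreover have "0 \<le> mu * (1 - lam)" using rates by simp
  ultimately show ?thesis by linarith
qed

lemma queue_sq_telescope:
  "real T * (lam * (1 - mu)) \<le> E T (\<lambda>s. (real (fst s))\<^sup>2) + 2 * (mu - lam) * (\<Sum>t<T. E t (\<lambda>s. real (fst s)))"
proof (induction T)
  case 0
  then show ?case by simp
next
  case (Suc T)
  have "E T (\<lambda>s. (real (fst s))\<^sup>2 + lam * (1 - mu) - 2 * (mu - lam) * real (fst s)) \<le> E (Suc T) (\<lambda>s. (real (fst s))\<^sup>2)"
    unfolding E_Suc by (intro integral_mono next_mean_queue_sq) simp_all
  then show ?case using Suc by (simp add: algebra_simps)
qed

lemma next_mean_potential: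
  assumes "fst s = 0 \<longrightarrow> snd s = 0"
  shows "next_mean (\<lambda>s. real (fst s) * real (min (snd s) K)) s
    = real (fst s) * real (min (snd s) K) + (if snd s < K then lam * real (fst s) + lam * (1 - mu) else 0)
      - (mu - lam) * real (min (snd s) K)"
proof -
  obtain Q B where s: "s = (Q, B)" by (cases s)
  show ?thesis
  proof (cases Q)
    case 0
    then have "B = 0" using assms s by simp
    then show ?thesis using 0 s by (cases K) (simp_all add: next_mean_eq busy_step_def algebra_simps)
  next
    case (Suc m)
    then show ?thesis using s
      by (cases m; cases "B < K") (simp_all add: next_mean_eq busy_step_def algebra_simps min_def)
  qed
qed

lemma potential_telescope:
  "E (T + N) (\<lambda>s. real (fst s) * real (min (snd s) K))
     + (mu - lam) * (\<Sum>i<N. E (T + i) (\<lambda>s. real (min (snd s) K)))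
   = E T (\<lambda>s. real (fst s) * real (min (snd s) K))
     + (\<Sum>i<N. E (T + i) (\<lambda>s. if snd s < K then lam * real (fst s) + lam * (1 - mu) else 0))"
proof (induction N)
  case 0
  then show ?case by simp
next
  case (Suc N)
  have "E (Suc (T + N)) (\<lambda>s. real (fst s) * real (min (snd s) K))
    = E (T + N) (\<lambda>s. real (fst s) * real (min (snd s) K) + (if snd s < K then lam * real (fst s) + lam * (1 - mu) else 0)
        - (mu - lam) * real (min (snd s) K))"
    unfolding E_Suc
    by (intro integral_cong_AE) (auto simp: AE_measure_pmf_iff next_mean_potential busy_chain_support)
  then show ?case using Suc by (simp add: algebra_simps)
qed

end

locale stable_link = link_rates +
  assumes stable: "0 < lam" "lam < mu" "mu < 1"
begin

text \<open>\<open>Q\<close> moves up with probability \<open>\<lambda>(1-\<mu>)\<close> and down with probability \<open>\<mu>(1-\<lambda>)\<close>, so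
  started empty its tail is dominated by the geometric stationary tail.\<close>

definition tail_ratio :: real where
  "tail_ratio = lam * (1 - mu) / (mu * (1 - lam))"

lemma tail_ratio_nonneg: "0 \<le> tail_ratio"
  using stable unfolding tail_ratio_def by simp

lemma tail_ratio_less_1: "tail_ratio < 1"
  using stable unfolding tail_ratio_def by (simp add: divide_less_eq algebra_simps)

lemma queue_tail: "E t (\<lambda>s. of_bool (k \<le> fst s)) \<le> tail_ratio ^ k"
proof (induction t arbitrary: k)
  case 0
  then show ?case using tail_ratio_nonneg by (cases k) auto
next
  case (Suc t)
  show ?case
  proof (cases k)
    case 0
    then show ?thesis by simp
  next
    case (Suc j)
    define pp p0 pm where "pp = lam * (1 - mu)" and "p0 = lam * mu + (1 - lam) * (1 - mu)"
      and "pm = mu * (1 - lam)"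
    have nonneg: "0 \<le> pp" "0 \<le> p0" "0 \<le> pm"
      using rates unfolding pp_def p0_def pm_def by simp_all
    have "E (Suc t) (\<lambda>s. of_bool (k \<le> fst s)) = E t (\<lambda>s. pp * of_bool (j \<le> fst s)
        + p0 * of_bool (Suc j \<le> fst s) + pm * of_bool (Suc (Suc j) \<le> fst s))"
      unfolding E_Suc Suc
      by (intro Bochner_Integration.integral_cong refl)
         (auto simp: next_mean_eq fst_busy_step le_diff_conv pp_def p0_def pm_def algebra_simps)
    also have "\<dots> = pp * E t (\<lambda>s. of_bool (j \<le> fst s)) + p0 * E t (\<lambda>s. of_bool (Suc j \<le> fst s))
        + pm * E t (\<lambda>s. of_bool (Suc (Suc j) \<le> fst s))"
      by simp
    also have "\<dots> \<le> pp * tail_ratio ^ j + p0 * tail_ratio ^ Suc j + pm * tail_ratio ^ Suc (Suc j)"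
      by (intro add_mono mult_left_mono Suc.IH nonneg)
    also have "\<dots> = tail_ratio ^ Suc j * (pm + p0 + pp)"
    proof -
      have "pp = tail_ratio * pm" using stable unfolding tail_ratio_def pp_def pm_def by simp
      then show ?thesis by (simp add: algebra_simps)
    qed
    also have "pm + p0 + pp = 1"
      unfolding pm_def p0_def pp_def by (simp add: algebra_simps)
    finally show ?thesis using Suc by simp
  qed
qed

definition moment_bound :: real where
  "moment_bound = 2 / (1 - tail_ratio)\<^sup>2"

lemma moment_bound_pos: "0 < moment_bound"
  using tail_ratio_less_1 unfolding moment_bound_def by simp

lemma queue_second_moment: "E t (\<lambda>s. (real (fst s))\<^sup>2) \<le> moment_bound"
proof -
  have "AE s in busy_chain lam mu t. (real (fst s))\<^sup>2 = (\<Sum>k<t. (2 * real k + 1) * of_bool (Suc k \<le> fst s))"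
    by (rule AE_pmfI, rule square_eq_sum_odd_indicator) (use busy_chain_support in blast)
  then have "E t (\<lambda>s. (real (fst s))\<^sup>2) = E t (\<lambda>s. \<Sum>k<t. (2 * real k + 1) * of_bool (Suc k \<le> fst s))"
    by (intro integral_cong_AE) simp_all
  also have "\<dots> = (\<Sum>k<t. (2 * real k + 1) * E t (\<lambda>s. of_bool (Suc k \<le> fst s)))"
    by (subst Bochner_Integration.integral_sum) auto
  also have "\<dots> \<le> (\<Sum>k<t. (2 * real k + 1) * tail_ratio ^ Suc k)"
    by (intro sum_mono mult_left_mono queue_tail) auto
  also have "\<dots> \<le> moment_bound"
    unfolding moment_bound_def by (rule sum_odd_times_power_le[OF tail_ratio_nonneg tail_ratio_less_1])
  finally show ?thesis .
qed

definition mean_bound :: real where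
  "mean_bound = lam * (1 - mu) / (4 * (mu - lam))"

lemma mean_bound_pos: "0 < mean_bound"
  using stable unfolding mean_bound_def by simp

lemma eventually_queue_mean_ge: "\<forall>\<^sub>F t in sequentially. mean_bound \<le> E t (\<lambda>s. real (fst s))"
proof -
  define pp where "pp = lam * (1 - mu)"
  have pp: "0 < pp" using stable unfolding pp_def by simp
  obtain T :: nat where T: "2 * moment_bound / pp < T" using reals_Archimedean2 by blast
  have "mean_bound \<le> E t (\<lambda>s. real (fst s))" if "T \<le> t" for t
  proof -
    let ?q = "E t (\<lambda>s. real (fst s))"
    have "2 * moment_bound / pp < real t"
      using T that by linarith
    then have t: "2 * moment_bound < real t * pp"
      using pp by (simp add: pos_divide_less_eq)
    have "(\<Sum>s<t. E s (\<lambda>s. real (fst s))) \<le> (\<Sum>s<t. ?q)"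
      by (intro sum_mono E_mono[OF mono_real_fst]) simp
    then have "2 * (mu - lam) * (\<Sum>s<t. E s (\<lambda>s. real (fst s))) \<le> 2 * (mu - lam) * (real t * ?q)"
      using stable by (intro mult_left_mono) auto
    then have "real t * pp \<le> moment_bound + 2 * (mu - lam) * (real t * ?q)"
      using queue_sq_telescope[of t] queue_second_moment[of t] unfolding pp_def by linarith
    with t have "real t * (pp / 2) < real t * (2 * (mu - lam) * ?q)"
      by (simp add: algebra_simps)
    then have "pp / 2 < 2 * (mu - lam) * ?q"
      by (rule mult_left_less_imp_less) simp
    then have "pp < ?q * (4 * (mu - lam))"
      by (simp add: algebra_simps)
    then have "pp / (4 * (mu - lam)) < ?q"
      using stable by (subst pos_divide_less_eq) auto
    then show ?thesis
      unfolding mean_bound_def pp_def by (rule less_imp_le)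
  qed
  then show ?thesis unfolding eventually_sequentially by blast
qed

lemma expectation_potential_le: "E t (\<lambda>s. real (fst s) * real (min (snd s) K)) \<le> real K * moment_bound"
proof -
  have "E t (\<lambda>s. real (fst s) * real (min (snd s) K)) \<le> E t (\<lambda>s. real K * (real (fst s))\<^sup>2)"
  proof (rule integral_mono)
    fix s :: "nat \<times> nat"
    have "real (fst s) \<le> (real (fst s))\<^sup>2"
      by (cases "fst s") (auto simp: power2_eq_square)
    then have "real (fst s) * real (min (snd s) K) \<le> (real (fst s))\<^sup>2 * real K"
      by (intro mult_mono) auto
    then show "real (fst s) * real (min (snd s) K) \<le> real K * (real (fst s))\<^sup>2"
      by (simp add: mult.commute)
  qed simp_all
  also have "\<dots> \<le> real K * moment_bound"
    using queue_second_moment[of t] by (simp add: mult_left_mono)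
  finally show ?thesis .
qed

lemma expectation_gain_ge:
  assumes "0 < \<epsilon>" "0 < K" and "a \<le> E t (\<lambda>s. real (fst s))" and "E t (\<lambda>s. real (snd s)) \<le> b"
  shows "lam * (a - \<epsilon> * moment_bound - b / (4 * \<epsilon> * real K))
    \<le> E t (\<lambda>s. if snd s < K then lam * real (fst s) + lam * (1 - mu) else 0)"
proof -
  have "\<epsilon> * E t (\<lambda>s. (real (fst s))\<^sup>2) \<le> \<epsilon> * moment_bound"
    using queue_second_moment[of t] assms(1) by (intro mult_left_mono) auto
  moreover have "E t (\<lambda>s. real (snd s)) / (4 * \<epsilon> * real K) \<le> b / (4 * \<epsilon> * real K)"
    using assms by (intro divide_right_mono) auto
  ultimately have "a - \<epsilon> * moment_bound - b / (4 * \<epsilon> * real K)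
      \<le> E t (\<lambda>s. real (fst s) - \<epsilon> * (real (fst s))\<^sup>2 - real (snd s) / (4 * \<epsilon> * real K))"
    using assms(3) by simp
  also have "\<dots> \<le> E t (\<lambda>s. if real (snd s) < real K then real (fst s) else 0)"
    by (intro integral_mono truncation_lower_bound) (use assms in auto)
  finally have "lam * (a - \<epsilon> * moment_bound - b / (4 * \<epsilon> * real K))
      \<le> E t (\<lambda>s. lam * (if snd s < K then real (fst s) else 0))"
    using rates by (simp add: mult_left_mono)
  also have "\<dots> \<le> E t (\<lambda>s. if snd s < K then lam * real (fst s) + lam * (1 - mu) else 0)"
    by (intro integral_mono) (use rates in auto)
  finally show ?thesis .
qed

lemma potential_balance:
  assumes "0 < \<epsilon>" "0 < K" and queue: "\<And>i. i < N \<Longrightarrow> a \<le> E (T + i) (\<lambda>s. real (fst s))"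
  defines "b \<equiv> E (T + N) (\<lambda>s. real (snd s))"
  shows "real N * (lam * (a - \<epsilon> * moment_bound - b / (4 * \<epsilon> * real K)))
    \<le> real K * moment_bound + (mu - lam) * (real N * b)"
proof -
  let ?gain = "\<lambda>s. if snd s < K then lam * real (fst s) + lam * (1 - mu) else 0"
  let ?potential = "\<lambda>s. real (fst s) * real (min (snd s) K)"
  have backlog: "E (T + i) (\<lambda>s. real (snd s)) \<le> b" if "i \<le> N" for i
    unfolding b_def using that by (intro E_mono[OF mono_real_snd]) simp
  have "(\<Sum>i<N. E (T + i) (\<lambda>s. real (min (snd s) K))) \<le> (\<Sum>i<N. b)"
  proof (intro sum_mono)
    fix i assume "i \<in> {..<N}"
    then have "E (T + i) (\<lambda>s. real (min (snd s) K)) \<le> E (T + i) (\<lambda>s. real (snd s))"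
      by (intro integral_mono) auto
    with backlog[of i] \<open>i \<in> {..<N}\<close> show "E (T + i) (\<lambda>s. real (min (snd s) K)) \<le> b" by simp
  qed
  then have capped: "(mu - lam) * (\<Sum>i<N. E (T + i) (\<lambda>s. real (min (snd s) K))) \<le> (mu - lam) * (real N * b)"
    using stable by (intro mult_left_mono) auto
  have "0 \<le> E T ?potential"
    by (rule Bochner_Integration.integral_nonneg) simp
  have "real N * (lam * (a - \<epsilon> * moment_bound - b / (4 * \<epsilon> * real K))) \<le> (\<Sum>i<N. E (T + i) ?gain)"
    using sum_mono[of "{..<N}", OF expectation_gain_ge[OF assms(1,2) queue backlog]] by simp
  also have "\<dots> = E (T + N) ?potential + (mu - lam) * (\<Sum>i<N. E (T + i) (\<lambda>s. real (min (snd s) K)))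
      - E T ?potential"
    using potential_telescope[of T N K] by simp
  also have "\<dots> \<le> real K * moment_bound + (mu - lam) * (real N * b)"
    using expectation_potential_le[of "T + N" K] capped \<open>0 \<le> E T ?potential\<close> by linarith
  finally show ?thesis .
qed

lemma backlog_mean_gt:
  assumes T: "\<And>t. T \<le> t \<Longrightarrow> mean_bound \<le> E t (\<lambda>s. real (fst s))"
    and K: "lam * moment_bound < real K * (mean_bound * (mu - lam))"
    and N: "4 * real K * moment_bound < real N * (lam * mean_bound)"
  shows "lam * mean_bound / (4 * (mu - lam)) < E (T + N) (\<lambda>s. real (snd s))"
proof -
  define a M where "a = mean_bound" and "M = moment_bound"
  define \<epsilon> where "\<epsilon> = a / (4 * M)"
  define b where "b = E (T + N) (\<lambda>s. real (snd s))"
  have d: "0 < mu - lam" using stable by simp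
  have a: "0 < a" and M: "0 < M" unfolding a_def M_def by (rule mean_bound_pos moment_bound_pos)+
  have \<epsilon>: "0 < \<epsilon>" and \<epsilon>M: "\<epsilon> * M = a / 4" unfolding \<epsilon>_def using a M by simp_all
  have "0 < lam * M" using stable M by simp
  with K have "0 < real K * (a * (mu - lam))" unfolding a_def M_def by linarith
  then have K_pos: "0 < real K" using a d by (simp add: zero_less_mult_iff)
  have b: "0 \<le> b" unfolding b_def by (rule Bochner_Integration.integral_nonneg) simp
  have "lam / (4 * \<epsilon> * real K) \<le> mu - lam"
    using K a M K_pos unfolding \<epsilon>_def a_def M_def by (simp add: pos_divide_le_eq ac_simps)
  then have "lam / (4 * \<epsilon> * real K) * b \<le> (mu - lam) * b"
    using b by (rule mult_right_mono)
  moreover have "lam * (a - \<epsilon> * M - b / (4 * \<epsilon> * real K)) = lam * (3 * a / 4) - lam / (4 * \<epsilon> * real K) * b"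
    using \<epsilon>M by (simp add: right_diff_distrib)
  ultimately have "real N * (lam * (3 * a / 4) - (mu - lam) * b)
      \<le> real N * (lam * (a - \<epsilon> * M - b / (4 * \<epsilon> * real K)))"
    by (intro mult_left_mono) simp_all
  also have "\<dots> \<le> real K * M + (mu - lam) * (real N * b)"
    unfolding b_def M_def by (rule potential_balance) (use \<epsilon> K_pos T a_def in auto)
  finally have "real N * (lam * (3 * a / 4) - (mu - lam) * b) \<le> real K * M + (mu - lam) * (real N * b)" .
  with N have "real N * (lam * a / 2) < real N * (2 * (mu - lam) * b)"
    unfolding a_def M_def by (simp add: algebra_simps)
  then have "lam * a / 2 < 2 * (mu - lam) * b"
    by (rule mult_left_less_imp_less) simp
  then show ?thesis
    unfolding a_def b_def using d by (subst pos_divide_less_eq) (auto simp: algebra_simps)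
qed

lemma eventually_backlog_mean_ge:
  "\<forall>\<^sub>F t in sequentially. lam * mean_bound / (4 * (mu - lam)) \<le> E t (\<lambda>s. real (snd s))"
proof -
  obtain T where T: "\<And>t. T \<le> t \<Longrightarrow> mean_bound \<le> E t (\<lambda>s. real (fst s))"
    using eventually_queue_mean_ge unfolding eventually_sequentially by blast
  obtain K :: nat where K: "lam * moment_bound < real K * (mean_bound * (mu - lam))"
    using ex_less_of_nat_mult[of "mean_bound * (mu - lam)"] mean_bound_pos stable by auto
  obtain N :: nat where N: "4 * real K * moment_bound < real N * (lam * mean_bound)"
    using ex_less_of_nat_mult[of "lam * mean_bound"] mean_bound_pos stable by auto
  have "lam * mean_bound / (4 * (mu - lam)) \<le> E t (\<lambda>s. real (snd s))" if "T + N \<le> t" for t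
    using backlog_mean_gt[of T, OF T K N] E_mono[OF mono_real_snd that] by linarith
  then show ?thesis unfolding eventually_sequentially by blast
qed

end

section \<open>The physical queue in steady state\<close>

lemma ss_phys_queue_ge:
  assumes "n \<ge> 1" and "0 < lam" "lam < mu" "mu < 1"
  shows "ennreal ((lam / mu)\<^sup>2 * (1 - mu) / 16 / (1 - lam / mu)\<^sup>2) \<le> ss_phys_queue lam mu n"
proof -
  interpret stable_link lam mu
    by unfold_locales (use assms in auto)
  have "1 - lam / mu = (mu - lam) / mu"
    using assms by (simp add: field_simps)
  then have "(lam / mu)\<^sup>2 * (1 - mu) / 16 / (1 - lam / mu)\<^sup>2 = lam\<^sup>2 * (1 - mu) / (16 * (mu - lam)\<^sup>2)"
    using assms by (simp add: power_divide)
  also have "\<dots> = lam * mean_bound / (4 * (mu - lam))"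
    using assms unfolding mean_bound_def by (simp add: power2_eq_square field_simps)
  finally have bound: "(lam / mu)\<^sup>2 * (1 - mu) / 16 / (1 - lam / mu)\<^sup>2 = lam * mean_bound / (4 * (mu - lam))" .
  have "\<forall>\<^sub>F t in sequentially.
      ennreal ((lam / mu)\<^sup>2 * (1 - mu) / 16 / (1 - lam / mu)\<^sup>2) \<le> exp_phys_queue lam mu n t"
    using eventually_backlog_mean_ge
  proof eventually_elim
    case (elim t)
    then show ?case
      unfolding bound using expectation_busy_chain_le_exp_phys_queue[OF assms(1), of lam mu t]
      by (meson ennreal_leI order_trans)
  qed
  then show ?thesis
    unfolding ss_phys_queue_def by (rule Liminf_bounded)
qed

lemma ss_phys_queue_ge_at_left:
  assumes "n \<ge> 1" and "0 < mu" "mu < 1"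
  shows "\<forall>\<^sub>F lam in at_left mu. ennreal ((1 - mu) / 64 / (1 - lam / mu)\<^sup>2) \<le> ss_phys_queue lam mu n"
proof -
  have "\<forall>\<^sub>F lam in at_left mu. lam \<in> {mu / 2<..<mu}"
    by (rule eventually_at_left_real) (use assms in simp)
  then show ?thesis
  proof eventually_elim
    case (elim lam)
    then have "(1 / 2)\<^sup>2 \<le> (lam / mu)\<^sup>2"
      using assms by (intro power_mono) (auto simp: field_simps)
    then have "(1 / 2)\<^sup>2 * ((1 - mu) / 16) \<le> (lam / mu)\<^sup>2 * ((1 - mu) / 16)"
      using assms by (intro mult_right_mono) auto
    then have "(1 - mu) / 64 \<le> (lam / mu)\<^sup>2 * (1 - mu) / 16"
      by (simp add: power2_eq_square)
    then have "(1 - mu) / 64 / (1 - lam / mu)\<^sup>2 \<le> (lam / mu)\<^sup>2 * (1 - mu) / 16 / (1 - lam / mu)\<^sup>2"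
      by (rule divide_right_mono) simp
    then show ?case
      using ss_phys_queue_ge[OF assms(1), of lam mu] elim assms by (auto intro: order_trans[OF ennreal_leI])
  qed
qed

lemma ss_phys_queue_ge_at_right:
  assumes "n \<ge> 1" and "0 < lam" "lam < 1"
  shows "\<forall>\<^sub>F mu in at_right lam.
    ennreal (lam\<^sup>2 * (1 - lam) / 32 / (1 - lam / mu)\<^sup>2) \<le> ss_phys_queue lam mu n"
proof -
  have "\<forall>\<^sub>F mu in at_right lam. mu \<in> {lam<..<(1 + lam) / 2}"
    by (rule eventually_at_right_real) (use assms in simp)
  then show ?thesis
  proof eventually_elim
    case (elim mu)
    then have "lam\<^sup>2 \<le> (lam / mu)\<^sup>2"
      using assms by (intro power_mono) (auto simp: field_simps)
    moreover have "(1 - lam) / 2 \<le> 1 - mu"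
      using elim by simp
    ultimately have "lam\<^sup>2 * ((1 - lam) / 2) \<le> (lam / mu)\<^sup>2 * (1 - mu)"
      using assms by (intro mult_mono) auto
    then have "lam\<^sup>2 * (1 - lam) / 32 \<le> (lam / mu)\<^sup>2 * (1 - mu) / 16"
      by (simp add: ac_simps)
    then have "lam\<^sup>2 * (1 - lam) / 32 / (1 - lam / mu)\<^sup>2 \<le> (lam / mu)\<^sup>2 * (1 - mu) / 16 / (1 - lam / mu)\<^sup>2"
      by (rule divide_right_mono) simp
    then show ?case
      using ss_phys_queue_ge[OF assms(1), of lam mu] elim assms by (auto intro: order_trans[OF ennreal_leI])
  qed
qed

theorem theorem1:
  fixes n :: nat
  assumes "n \<ge> 1"
  shows "(\<forall>mu::real. 0 < mu \<and> mu < 1 \<longrightarrow>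
            (\<exists>c>0. \<forall>\<^sub>F lam in at_left mu.
               ennreal (c / (1 - lam / mu)\<^sup>2) \<le> ss_phys_queue lam mu n))
       \<and> (\<forall>lam::real. 0 < lam \<and> lam < 1 \<longrightarrow>
            (\<exists>c>0. \<forall>\<^sub>F mu in at_right lam.
               ennreal (c / (1 - lam / mu)\<^sup>2) \<le> ss_phys_queue lam mu n))"
proof (intro conjI allI impI)
  fix mu :: real
  assume "0 < mu \<and> mu < 1"
  then show "\<exists>c>0. \<forall>\<^sub>F lam in at_left mu. ennreal (c / (1 - lam / mu)\<^sup>2) \<le> ss_phys_queue lam mu n"
    using ss_phys_queue_ge_at_left[OF assms] by (intro exI[of _ "(1 - mu) / 64"]) auto
next
  fix lam :: real
  assume "0 < lam \<and> lam < 1"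
  then show "\<exists>c>0. \<forall>\<^sub>F mu in at_right lam. ennreal (c / (1 - lam / mu)\<^sup>2) \<le> ss_phys_queue lam mu n"
    using ss_phys_queue_ge_at_right[OF assms] by (intro exI[of _ "lam\<^sup>2 * (1 - lam) / 32"]) auto
qed

end
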